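(* Let $\mu\in\mathbb{C}\setminus\{0\}$. Then $\mu$ is a Floquet multiplier of the system $\dot{x}(t)=\sum_{j=0}^h A_j(t)x(t-\tau_j)$ if and only if there exists a continuous $\mathbb{C}^{Nd}$-valued function $\bm{q}(s)=\big(q_1^{\mathrm T}(s)\,\cdots\,q_N^{\mathrm T}(s)\big)^{\mathrm T}$, $s\in[0,1]$, with $\bm{q}(0)\neq 0$, which satisfies the boundary value problem \[ \dot{\bm{q}}(s)=A(s,\mu)\bm{q}(s),\quad s\in[0,1],\qquad \bm{q}(1)=B(\mu)\bm{q}(0), \] where $B(\mu)=\begin{pmatrix}0 & I_{N-1}\\ \mu & 0\end{pmatrix}\otimes I_d$ and the differential equation $\dot{\bm q}(s)=A(s,\mu)\bm q(s)$ means, componentwise, \[ \dot{q}_n(s)=\Delta\sum_{j=0}^h A_j\big((s+n-1)\Delta\big)\,\mu^{a_{n-n_j}}\,q_{b_{n-n_j}}(s),\qquad n=1,\ldots,N, \] with $a_k=\lfloor (k-1)/N\rfloor$ and $b_k=((k-1)\bmod N)+1$.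
   Context: Consider the linear time-periodic delay system $\dot{x}(t)=\sum_{j=0}^h A_j(t)x(t-\tau_j)$ with $h\in\mathbb{N}$, $x(t)\in\mathbb{R}^d$, where each $A_j:\mathbb{R}\to\mathbb{R}^{d\times d}$ is smooth and $T$-periodic ($T>0$), and $0=\tau_0\le\tau_1<\tau_2<\cdots<\tau_h$. Assume there exist $\Delta>0$ and integers $N$, $n_j$ ($j=1,\dots,h$) with $T=N\Delta$ and $\tau_j=n_j\Delta$; set $n_0=0$. Let $X=C([-\tau_h,0],\mathbb{C}^d)$. For $\phi\in X$ and $t_0\in\mathbb{R}$, $x(t;t_0,\phi)$ denotes the unique forward solution with $x(t)=\phi(t-t_0)$ for $t\in[t_0-\tau_h,t_0]$, and $x_t(\theta;t_0,\phi)=x(t+\theta;t_0,\phi)$, $\theta\in[-\tau_h,0]$. The monodromy operator $\mathscr{U}:X\to X$ is $\mathscr{U}\phi=x_T(\cdot;0,\phi)$. Floquet multipliers are the nonzero eigenvalues of $\mathscr{U}$, i.e. $\mu\neq0$ with $\mathscr{U}\phi=\mu\phi$ for some $\phi\in X\setminus\{0\}$. $\otimes$ is the Kronecker product and $k\bmod N$ the remainder of $k$ on division by $N$. *)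

theory Defs
  imports "HOL-Analysis.Analysis"
begin

definition smooth_fun :: "(real \<Rightarrow> 'a::real_normed_vector) \<Rightarrow> bool" where
  "smooth_fun f \<longleftrightarrow> (\<exists>D. D 0 = f \<and> (\<forall>k t. (D k has_vector_derivative D (Suc k) t) (at t)))"

definition cmat :: "real^'d^'d \<Rightarrow> complex^'d^'d" where
  "cmat M = (\<chi> i k. complex_of_real (M $ i $ k))"

definition dde_rhs :: "(nat \<Rightarrow> real \<Rightarrow> real^'d^'d) \<Rightarrow> nat \<Rightarrow> (nat \<Rightarrow> real)
    \<Rightarrow> (real \<Rightarrow> complex^'d) \<Rightarrow> real \<Rightarrow> complex^'d" where
  "dde_rhs A h \<tau> x t = (\<Sum>j\<le>h. cmat (A j t) *v x (t - \<tau> j))"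

definition dde_sol :: "(nat \<Rightarrow> real \<Rightarrow> real^'d^'d) \<Rightarrow> nat \<Rightarrow> (nat \<Rightarrow> real)
    \<Rightarrow> (real \<Rightarrow> complex^'d) \<Rightarrow> (real \<Rightarrow> complex^'d) \<Rightarrow> bool" where
  "dde_sol A h \<tau> \<phi> x \<longleftrightarrow>
     continuous_on {-\<tau> h..} x \<and> (\<forall>\<theta>\<in>{-\<tau> h..0}. x \<theta> = \<phi> \<theta>) \<and>
     (\<forall>t\<ge>0. (x has_vector_derivative dde_rhs A h \<tau> x t) (at t within {0..}))"

definition monodromy :: "(nat \<Rightarrow> real \<Rightarrow> real^'d^'d) \<Rightarrow> nat \<Rightarrow> (nat \<Rightarrow> real) \<Rightarrow> real
    \<Rightarrow> (real \<Rightarrow> complex^'d) \<Rightarrow> (real \<Rightarrow> complex^'d)" where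
  "monodromy A h \<tau> T \<phi> = (THE y. \<exists>x. dde_sol A h \<tau> \<phi> x \<and>
       y = (\<lambda>\<theta>. if \<theta> \<in> {-\<tau> h..0} then x (T + \<theta>) else 0))"

definition floquet_multiplier :: "(nat \<Rightarrow> real \<Rightarrow> real^'d^'d) \<Rightarrow> nat \<Rightarrow> (nat \<Rightarrow> real) \<Rightarrow> real
    \<Rightarrow> complex \<Rightarrow> bool" where
  "floquet_multiplier A h \<tau> T \<mu> \<longleftrightarrow> \<mu> \<noteq> 0 \<and>
     (\<exists>\<phi>. continuous_on {-\<tau> h..0} \<phi> \<and> (\<exists>\<theta>\<in>{-\<tau> h..0}. \<phi> \<theta> \<noteq> 0) \<and>
        (\<forall>\<theta>\<in>{-\<tau> h..0}. monodromy A h \<tau> T \<phi> \<theta> = \<mu> *s \<phi> \<theta>))"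

definition idx_a :: "nat \<Rightarrow> int \<Rightarrow> int" where
  "idx_a N k = \<lfloor>real_of_int (k - 1) / real N\<rfloor>"

definition idx_b :: "nat \<Rightarrow> int \<Rightarrow> nat" where
  "idx_b N k = nat ((k - 1) mod int N) + 1"

text \<open>The boundary value problem; the vector q in C^{Nd} is represented by its d-blocks
  q 1, ..., q N. B(mu) = [[0, I_{N-1}], [mu, 0]] (x) I_d is written out blockwise.\<close>
definition floquet_bvp :: "(nat \<Rightarrow> real \<Rightarrow> real^'d^'d) \<Rightarrow> nat \<Rightarrow> (nat \<Rightarrow> int) \<Rightarrow> nat \<Rightarrow> real
    \<Rightarrow> complex \<Rightarrow> (nat \<Rightarrow> real \<Rightarrow> complex^'d) \<Rightarrow> bool" where
  "floquet_bvp A h n N \<Delta> \<mu> q \<longleftrightarrow>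
     (\<forall>m\<in>{1..N}. continuous_on {0..1} (q m)) \<and>
     (\<exists>m\<in>{1..N}. q m 0 \<noteq> 0) \<and>
     (\<forall>m\<in>{1..N}. \<forall>s\<in>{0..1}. (q m has_vector_derivative
         (complex_of_real \<Delta> *s (\<Sum>j\<le>h.
            cmat (A j ((s + real m - 1) * \<Delta>)) *v
              ((\<mu> powi idx_a N (int m - n j)) *s q (idx_b N (int m - n j)) s))))
       (at s within {0..1})) \<and>
     (\<forall>m\<in>{1..N}. q m 1 = (if m < N then q (m + 1) 0 else \<mu> *s q 1 0))"

end

theory Submission
  imports Defs
begin

text \<open>
  If \<open>\<mu>\<close> is a Floquet multiplier with eigenfunction \<open>\<phi>\<close>, the solution \<open>x\<close> starting from \<open>\<phi>\<close>
  satisfies \<open>x (t + T) = \<mu> x t\<close>: both sides solve the equation (the coefficients are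
  \<open>T\<close>-periodic) and have the same initial function. Cutting \<open>x\<close> into the blocks
  \<open>q\<^sub>m s = x ((s + m - 1) \<Delta>)\<close>, \<open>m = 1, \<dots>, N\<close>, turns the delays \<open>n\<^sub>j \<Delta>\<close> into shifts of the block
  index, and every time a shift leaves \<open>{1, \<dots>, N}\<close> the quasi-periodicity contributes a
  factor \<open>\<mu>\<^sup>\<plusminus>\<^sup>1\<close>; this is the boundary value problem. Here \<open>q 0 \<noteq> 0\<close>, since a solution of the
  (ordinary, linear) block system vanishing at \<open>0\<close> vanishes identically, and then so would \<open>x\<close>. Conversely, the
  blocks of a solution of the boundary value problem glue, thanks to the boundary conditions, to
  a function on the whole line that solves the delay equation and is multiplied by \<open>\<mu>\<close> under a
  shift by \<open>T\<close>. The monodromy operator is well defined because the delay equation has unique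
  global solutions: uniqueness by a Gronwall-type argument, existence by Banach's fixed point
  theorem on successive short intervals.
\<close>

section \<open>Vector-valued calculus\<close>

lemma norm_vector_smult:
  fixes x :: "'a::real_normed_div_algebra^'n"
  shows "norm (c *s x) = norm c * norm x"
  unfolding norm_vec_def by (simp add: norm_mult L2_set_right_distrib)

lemma bounded_linear_vector_smult:
  "bounded_linear (\<lambda>x::'a::real_normed_div_algebra^'n. c *s x)"
proof (rule bounded_linear_intro[where K = "norm c"])
  show "c *s (x + y) = c *s x + c *s y" for x y :: "'a^'n"
    by (rule vector_add_ldistrib)
  show "c *s (r *\<^sub>R x) = r *\<^sub>R (c *s x)" for r and x :: "'a^'n"
    by (simp add: vec_eq_iff mult_scaleR_right)
  show "norm (c *s x) \<le> norm x * norm c" for x :: "'a^'n"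
    by (simp add: norm_vector_smult mult.commute)
qed

lemma has_vector_derivative_vector_smult:
  fixes f :: "real \<Rightarrow> 'a::real_normed_div_algebra^'n"
  shows "(f has_vector_derivative f') F \<Longrightarrow> ((\<lambda>t. c *s f t) has_vector_derivative c *s f') F"
  by (rule bounded_linear.has_vector_derivative[OF bounded_linear_vector_smult])

lemma vector_smult_sum:
  fixes f :: "'b \<Rightarrow> 'a::semiring_0^'n"
  shows "c *s sum f S = (\<Sum>x\<in>S. c *s f x)"
  by (simp add: vec_eq_iff sum_distrib_left)

lemma scaleR_eq_of_real_vector_smult:
  fixes x :: "'a::real_algebra_1^'n"
  shows "r *\<^sub>R x = (of_real r :: 'a) *s x"
  unfolding vec_eq_iff by (metis vector_scaleR_component vector_smult_component scaleR_conv_of_real)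

lemma norm_matrix_vector_mult_le:
  fixes M :: "'a::real_normed_div_algebra^'n^'m"
  shows "norm (M *v x) \<le> (\<Sum>i\<in>UNIV. \<Sum>k\<in>UNIV. norm (M $ i $ k)) * norm x"
proof -
  have "norm (M *v x) \<le> (\<Sum>i\<in>UNIV. norm ((M *v x) $ i))"
    unfolding norm_vec_def by (rule L2_set_le_sum) auto
  also have "\<dots> \<le> (\<Sum>i\<in>UNIV. (\<Sum>k\<in>UNIV. norm (M $ i $ k)) * norm x)"
  proof (rule sum_mono)
    fix i
    have "norm ((M *v x) $ i) \<le> (\<Sum>k\<in>UNIV. norm (M $ i $ k * x $ k))"
      unfolding matrix_vector_mult_def by (simp add: norm_sum)
    also have "\<dots> \<le> (\<Sum>k\<in>UNIV. norm (M $ i $ k) * norm x)"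
      by (intro sum_mono) (auto simp: norm_mult intro!: mult_left_mono Finite_Cartesian_Product.norm_nth_le)
    finally show "norm ((M *v x) $ i) \<le> (\<Sum>k\<in>UNIV. norm (M $ i $ k)) * norm x"
      by (simp add: sum_distrib_right)
  qed
  finally show ?thesis by (simp add: sum_distrib_right)
qed

lemma norm_diff_le_of_vector_derivative_bound:
  fixes f :: "real \<Rightarrow> 'a::real_normed_vector"
  assumes "a \<le> b"
    and "\<And>t. t \<in> {a..b} \<Longrightarrow> (f has_vector_derivative f' t) (at t within {a..b})"
    and "\<And>t. t \<in> {a..b} \<Longrightarrow> norm (f' t) \<le> B"
  shows "norm (f b - f a) \<le> B * (b - a)"
proof -
  have "norm (f b - f a) \<le> B * norm (b - a)"
  proof (rule differentiable_bound[of "{a..b}" f "\<lambda>t h. h *\<^sub>R f' t"])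
    fix t assume "t \<in> {a..b}"
    then show "(f has_derivative (\<lambda>h. h *\<^sub>R f' t)) (at t within {a..b})"
      and "onorm (\<lambda>h. h *\<^sub>R f' t) \<le> B"
      using assms(2,3) by (auto simp: has_vector_derivative_def onorm_scaleR_left onorm_id)
  qed (use assms(1) in auto)
  then show ?thesis using assms(1) by simp
qed

lemma at_within_atLeast_eq_atLeastAtMost:
  fixes t :: real
  shows "t < c \<Longrightarrow> at t within {a..} = at t within {a..c}"
  by (rule at_within_nhd[where S = "{..<c}"]) auto

lemma has_vector_derivative_within_Un:
  "(f has_vector_derivative f') (at t within S) \<Longrightarrow> (f has_vector_derivative f') (at t within T)
    \<Longrightarrow> (f has_vector_derivative f') (at t within S \<union> T)"
  unfolding has_vector_derivative_def has_derivative_iff_norm by (auto simp: Lim_within_Un)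

lemma has_vector_derivative_on_grid:
  fixes f :: "real \<Rightarrow> 'a::real_normed_vector"
  assumes "0 < \<Delta>"
    and cell: "\<And>k t. t \<in> {of_int k * \<Delta>..(of_int k + 1) * \<Delta>} \<Longrightarrow>
      (f has_vector_derivative f' t) (at t within {of_int k * \<Delta>..(of_int k + 1) * \<Delta>})"
  shows "(f has_vector_derivative f' t) (at t)"
proof -
  define k where "k = \<lfloor>t / \<Delta>\<rfloor>"
  have "of_int k \<le> t / \<Delta>" "t / \<Delta> < of_int k + 1"
    unfolding k_def by linarith+
  then have k: "of_int k * \<Delta> \<le> t" "t < (of_int k + 1) * \<Delta>"
    using assms(1) by (simp_all add: pos_le_divide_eq pos_divide_less_eq)
  show ?thesis
  proof (cases "of_int k * \<Delta> < t")
    case True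
    then have "t \<in> interior {of_int k * \<Delta>..(of_int k + 1) * \<Delta>}" using k by simp
    moreover have "(f has_vector_derivative f' t) (at t within {of_int k * \<Delta>..(of_int k + 1) * \<Delta>})"
      using k by (intro cell) simp
    ultimately show ?thesis by (simp only: at_within_interior)
  next
    case False
    then have t: "t = of_int k * \<Delta>" using k by simp
    define l u where "l = (of_int k - 1) * \<Delta>" and "u = (of_int k + 1) * \<Delta>"
    have lu: "l < t" "t < u" using t assms(1) by (simp_all add: l_def u_def algebra_simps)
    have "(f has_vector_derivative f' t) (at t within {l..t} \<union> {t..u})"
    proof (rule has_vector_derivative_within_Un)
      show "(f has_vector_derivative f' t) (at t within {l..t})"
        using cell[of t "k - 1"] t lu by (simp add: l_def algebra_simps)
      show "(f has_vector_derivative f' t) (at t within {t..u})"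
        using cell[of t k] t lu by (simp add: u_def)
    qed
    moreover have "{l..t} \<union> {t..u} = {l..u}" using lu by (simp add: ivl_disj_un_two_touch)
    moreover have "t \<in> interior {l..u}" using lu by simp
    ultimately show ?thesis by (simp only: at_within_interior)
  qed
qed

section \<open>Gronwall-type uniqueness and a fixed point theorem on \<open>C([a, b])\<close>\<close>

lemma eq_0_if_growth_bounded:
  fixes g :: "real \<Rightarrow> real"
  assumes cont: "continuous_on {a..b} g" and nonneg: "\<And>t. t \<in> {a..b} \<Longrightarrow> 0 \<le> g t"
    and "g a = 0" and "0 \<le> K"
    and growth: "\<And>c t M. a \<le> c \<Longrightarrow> c \<le> t \<Longrightarrow> t \<le> b \<Longrightarrow> (\<And>r. r \<in> {a..c} \<Longrightarrow> g r = 0)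
      \<Longrightarrow> (\<And>r. r \<in> {c..t} \<Longrightarrow> g r \<le> M) \<Longrightarrow> g t \<le> K * (t - c) * M"
    and t: "t \<in> {a..b}"
  shows "g t = 0"
proof -
  \<comment> \<open>On each step of length \<open>\<delta>\<close> the maximum of \<open>g\<close> is at most half of itself.\<close>
  define \<delta> where "\<delta> = 1 / (2 * K + 1)"
  have "0 < \<delta>" "K * \<delta> \<le> 1/2" using \<open>0 \<le> K\<close> by (simp_all add: \<delta>_def field_simps)
  have zero: "\<forall>r\<in>{a..min (a + real k * \<delta>) b}. g r = 0" for k
  proof (induction k)
    case 0
    then show ?case using \<open>g a = 0\<close> by auto
  next
    case (Suc k)
    define c e where "c = min (a + real k * \<delta>) b" and "e = min (a + real (Suc k) * \<delta>) b"
    show ?case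
    proof (cases "a \<le> b")
      case True
      have c: "a \<le> c" "c \<le> e" "e \<le> c + \<delta>" "e \<le> b"
        using True \<open>0 < \<delta>\<close> by (auto simp: c_def e_def algebra_simps)
      have "continuous_on {c..e} g"
        using c by (intro continuous_on_subset[OF cont]) auto
      then obtain m where m: "m \<in> {c..e}" "\<And>r. r \<in> {c..e} \<Longrightarrow> g r \<le> g m"
        using continuous_attains_sup[of "{c..e}" g] c by auto
      have "g m \<le> K * (m - c) * g m"
        using growth[of c m "g m"] Suc.IH m c by (auto simp: c_def)
      also have "\<dots> \<le> K * \<delta> * g m"
        using m c \<open>0 \<le> K\<close> nonneg[of m]
        by (intro mult_right_mono mult_left_mono) auto
      also have "\<dots> \<le> 1/2 * g m"
        using \<open>K * \<delta> \<le> 1/2\<close> nonneg[of m] m c by (intro mult_right_mono) auto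
      finally have "g m \<le> 0" by simp
      have "g r = 0" if r: "r \<in> {a..e}" for r
      proof (cases "r \<le> c")
        case True
        then show ?thesis using Suc.IH r by (simp add: c_def)
      next
        case False
        then have "g r \<le> 0" using m(2)[of r] \<open>g m \<le> 0\<close> r by simp
        moreover have "0 \<le> g r" using nonneg[of r] r c by simp
        ultimately show ?thesis by simp
      qed
      then show ?thesis by (simp add: e_def)
    qed simp
  qed
  obtain k :: nat where "(b - a) / \<delta> \<le> real k" using real_arch_simple by blast
  then have "min (a + real k * \<delta>) b = b" using \<open>0 < \<delta>\<close> by (simp add: field_simps)
  then show ?thesis using zero[of k] t by simp
qed

lemma eq_0_if_derivatives_bounded_by_past:
  fixes z :: "'i \<Rightarrow> real \<Rightarrow> 'a::real_normed_vector"
  assumes "finite I" and "0 \<le> K"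
    and cont: "\<And>i. i \<in> I \<Longrightarrow> continuous_on {a..b} (z i)"
    and deriv: "\<And>i t. i \<in> I \<Longrightarrow> t \<in> {a..b} \<Longrightarrow>
      (z i has_vector_derivative z' i t) (at t within {a..b})"
    and bound: "\<And>i t M. i \<in> I \<Longrightarrow> t \<in> {a..b} \<Longrightarrow>
      (\<And>j r. j \<in> I \<Longrightarrow> r \<in> {a..t} \<Longrightarrow> norm (z j r) \<le> M) \<Longrightarrow> norm (z' i t) \<le> K * M"
    and init: "\<And>i. i \<in> I \<Longrightarrow> z i a = 0"
    and "i \<in> I" and "t \<in> {a..b}"
  shows "z i t = 0"
proof -
  define g where "g r = (\<Sum>i\<in>I. norm (z i r))" for r
  have le_g: "norm (z i r) \<le> g r" if "i \<in> I" for i r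
    unfolding g_def using \<open>finite I\<close> that by (intro member_le_sum) auto
  have "g t = 0"
  proof (rule eq_0_if_growth_bounded[where g = g and a = a and b = b and K = "card I * K"])
    show "continuous_on {a..b} g"
      unfolding g_def by (intro continuous_intros cont)
    show "g a = 0" by (simp add: g_def init)
  next
    fix c t M
    assume ct: "a \<le> c" "c \<le> t" "t \<le> b" and zero: "\<And>r. r \<in> {a..c} \<Longrightarrow> g r = 0"
      and le_M: "\<And>r. r \<in> {c..t} \<Longrightarrow> g r \<le> M"
    have "0 \<le> M" using le_M[of c] zero[of c] ct by simp
    have z_le_M: "norm (z j r) \<le> M" if "j \<in> I" "r \<in> {a..t}" for j r
      using le_g[OF that(1), of r] zero[of r] le_M[of r] that \<open>0 \<le> M\<close>
      by (cases "r \<le> c") auto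
    have "norm (z i t) \<le> K * M * (t - c)" if i: "i \<in> I" for i
    proof -
      have "norm (z i t - z i c) \<le> K * M * (t - c)"
      proof (rule norm_diff_le_of_vector_derivative_bound[OF ct(2)])
        fix r assume r: "r \<in> {c..t}"
        then show "(z i has_vector_derivative z' i r) (at r within {c..t})"
          using ct by (intro has_vector_derivative_within_subset[OF deriv[OF i]]) auto
        show "norm (z' i r) \<le> K * M"
          using r ct by (intro bound[OF i] z_le_M) auto
      qed
      moreover have "z i c = 0" using le_g[OF i, of c] zero[of c] ct by simp
      ultimately show ?thesis by simp
    qed
    then show "g t \<le> real (card I) * K * (t - c) * M"
      unfolding g_def using sum_mono[of I "\<lambda>i. norm (z i t)" "\<lambda>_. K * M * (t - c)"]
      by (simp add: algebra_simps)
  qed (use \<open>0 \<le> K\<close> \<open>t \<in> {a..b}\<close> in \<open>simp_all add: g_def sum_nonneg\<close>)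
  then show ?thesis using le_g[OF \<open>i \<in> I\<close>, of t] by simp
qed

lemma contraction_fixpoint_continuous_on_interval:
  fixes \<Phi> :: "(real \<Rightarrow> 'a::complete_space) \<Rightarrow> real \<Rightarrow> 'a"
  assumes "0 \<le> q" "q < 1"
    and cont: "\<And>u. continuous_on {a..b} u \<Longrightarrow> continuous_on {a..b} (\<Phi> u)"
    and contraction: "\<And>u v M t. continuous_on {a..b} u \<Longrightarrow> continuous_on {a..b} v \<Longrightarrow>
      (\<And>r. r \<in> {a..b} \<Longrightarrow> dist (u r) (v r) \<le> M) \<Longrightarrow> t \<in> {a..b} \<Longrightarrow> dist (\<Phi> u t) (\<Phi> v t) \<le> q * M"
  obtains u where "continuous_on {a..b} u" "\<And>t. t \<in> {a..b} \<Longrightarrow> \<Phi> u t = u t"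
proof (cases "a \<le> b")
  case True
  have clamp: "clamp a b x \<in> {a..b}" for x :: real
    using clamp_in_interval[of a b x] True by (simp add: cbox_interval)
  have extend: "\<exists>U. \<forall>x. apply_bcontfun U x = f (clamp a b x)" if "continuous_on {a..b} f" for f :: "real \<Rightarrow> 'a"
    using continuous_on_cbox_bcontfunE[of a b f] that by (metis cbox_interval)
  define G where "G U = (SOME V. \<forall>x. apply_bcontfun V x = \<Phi> (apply_bcontfun U) (clamp a b x))" for U
  have G: "apply_bcontfun (G U) x = \<Phi> (apply_bcontfun U) (clamp a b x)" for U x
    using someI_ex[OF extend[OF cont[OF continuous_on_apply_bcontfun]]] by (simp add: G_def)
  have "dist (G U) (G V) \<le> q * dist U V" for U V
    by (rule dist_bound, unfold G) (intro contraction clamp dist_bounded continuous_on_apply_bcontfun)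
  then obtain U where "G U = U"
    using banach_fix_type[OF assms(1,2)] by blast
  then have "\<Phi> (apply_bcontfun U) t = apply_bcontfun U t" if "t \<in> {a..b}" for t
    using G[of U t] that by (simp add: cbox_interval)
  then show ?thesis by (intro that[of "apply_bcontfun U"]) auto
qed (use that[of "\<lambda>_. undefined"] in simp)

section \<open>Cutting a function into \<open>N\<close> blocks\<close>

lemma idx_decomp:
  assumes "0 < N"
  shows "k = idx_a N k * int N + int (idx_b N k)"
proof -
  have a: "idx_a N k = (k - 1) div int N"
    unfolding idx_a_def using floor_divide_of_int_eq[of "k - 1" "int N"] by simp
  have b: "int (idx_b N k) = (k - 1) mod int N + 1"
    using assms by (simp add: idx_b_def)
  have "k - 1 = (k - 1) div int N * int N + (k - 1) mod int N"
    by (rule div_mult_mod_eq[symmetric])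
  then show ?thesis unfolding a b by linarith
qed

lemma idx_b_range:
  assumes "0 < N"
  shows "idx_b N k \<in> {1..N}"
proof -
  have "0 \<le> (k - 1) mod int N" "(k - 1) mod int N < int N" using assms by simp_all
  then show ?thesis unfolding idx_b_def by (simp add: nat_less_iff)
qed

lemma idx_eqI:
  assumes "m \<in> {1..N}" and "k = a * int N + int m"
  shows "idx_a N k = a" and "idx_b N k = m"
proof -
  have k: "k - 1 = (int m - 1) + a * int N" and "0 \<le> int m - 1" "int m - 1 < int N"
    using assms by auto
  then have "(k - 1) div int N = a" "(k - 1) mod int N = int m - 1"
    unfolding k by (simp_all add: div_pos_pos_trivial mod_pos_pos_trivial)
  then show "idx_a N k = a" and "idx_b N k = m"
    unfolding idx_a_def idx_b_def using floor_divide_of_int_eq[of "k - 1" "int N"] assms(1)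
    by (simp_all add: nat_diff_distrib)
qed

lemma idx_shift:
  assumes "0 < N"
  shows "idx_a N (k + a * int N) = idx_a N k + a" and "idx_b N (k + a * int N) = idx_b N k"
  using idx_eqI[OF idx_b_range[OF assms], of "k + a * int N" "idx_a N k + a"]
    idx_decomp[OF assms, of k] by (simp_all add: algebra_simps)

lemma lattice_point_decomp:
  assumes "0 < \<Delta>"
  shows "t = (frac (t / \<Delta>) + of_int (\<lfloor>t / \<Delta>\<rfloor> + 1) - 1) * \<Delta>"
  using assms by (simp add: frac_def)

definition cut_blocks :: "real \<Rightarrow> (real \<Rightarrow> 'a) \<Rightarrow> nat \<Rightarrow> real \<Rightarrow> 'a" where
  "cut_blocks \<Delta> x m s = x ((s + real m - 1) * \<Delta>)"

text \<open>The inverse of \<^const>\<open>cut_blocks\<close> on \<open>\<mu>\<close>-quasi-periodic functions: on the cell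
  \<open>[(k - 1) \<Delta>, k \<Delta>]\<close> it is \<open>\<mu>\<^bsup>a\<^sub>k\<^esup> q\<^bsub>b\<^sub>k\<^esub>\<close>.\<close>

definition glue_blocks :: "nat \<Rightarrow> real \<Rightarrow> complex \<Rightarrow> (nat \<Rightarrow> real \<Rightarrow> complex^'d) \<Rightarrow> real \<Rightarrow> complex^'d" where
  "glue_blocks N \<Delta> \<mu> q t =
     (\<mu> powi idx_a N (\<lfloor>t / \<Delta>\<rfloor> + 1)) *s q (idx_b N (\<lfloor>t / \<Delta>\<rfloor> + 1)) (frac (t / \<Delta>))"

lemma glue_blocks_at_lattice_point:
  assumes "0 < \<Delta>" "0 \<le> s" "s < 1"
  shows "glue_blocks N \<Delta> \<mu> q ((s + of_int k - 1) * \<Delta>) = (\<mu> powi idx_a N k) *s q (idx_b N k) s"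
proof -
  have "\<lfloor>s + of_int k - 1\<rfloor> = k - 1" using assms by (intro floor_unique) auto
  then show ?thesis using assms by (simp add: glue_blocks_def frac_def)
qed

section \<open>Existence and uniqueness of solutions of the delay equation\<close>

text \<open>Grafting the increments of \<open>u\<close> (rather than \<open>u\<close> itself) onto \<open>w\<close> at \<open>c\<close> gives a continuous
  function for every continuous \<open>u\<close>, so that the fixed point argument can run on all of
  \<open>C([c, e])\<close>.\<close>

definition graft :: "(real \<Rightarrow> 'a::ab_group_add) \<Rightarrow> real \<Rightarrow> (real \<Rightarrow> 'a) \<Rightarrow> real \<Rightarrow> 'a" where
  "graft w c u r = (if r \<le> c then w r else w c + (u r - u c))"

lemma continuous_on_graft:
  fixes w u :: "real \<Rightarrow> 'a::real_normed_vector"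
  assumes "continuous_on {a..c} w" "continuous_on {c..e} u" "a \<le> c" "c \<le> e"
  shows "continuous_on {a..e} (graft w c u)"
proof -
  have left: "continuous_on {a..c} (graft w c u)"
    using assms(1) by (rule continuous_on_eq) (simp add: graft_def)
  have "continuous_on {c..e} (\<lambda>r. w c + (u r - u c))"
    using assms(2) by (intro continuous_intros)
  then have "continuous_on {c..e} (graft w c u)"
    by (rule continuous_on_eq) (auto simp: graft_def)
  with left have "continuous_on ({a..c} \<union> {c..e}) (graft w c u)"
    by (intro continuous_on_closed_Un) auto
  moreover have "{a..c} \<union> {c..e} = {a..e}" using assms(3,4) by auto
  ultimately show ?thesis by simp
qed

lemma norm_graft_diff_le:
  fixes w u v :: "real \<Rightarrow> 'a::real_normed_vector"
  assumes "\<And>r. r \<in> {c..e} \<Longrightarrow> dist (u r) (v r) \<le> M" and "0 \<le> M" and "c \<le> e" and "r \<le> e"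
  shows "norm (graft w c u r - graft w c v r) \<le> 2 * M"
proof (cases "r \<le> c")
  case False
  have "graft w c u r - graft w c v r = (u r - v r) - (u c - v c)" using False by (simp add: graft_def)
  also have "norm \<dots> \<le> dist (u r) (v r) + dist (u c) (v c)"
    by (simp add: dist_norm norm_triangle_ineq4)
  also have "\<dots> \<le> 2 * M" using assms(1)[of r] assms(1)[of c] False assms(3,4) by simp
  finally show ?thesis .
qed (simp add: graft_def \<open>0 \<le> M\<close>)

locale delay_system =
  fixes A :: "nat \<Rightarrow> real \<Rightarrow> real^'d^'d" and h :: nat and \<tau> :: "nat \<Rightarrow> real"
  assumes continuous_A: "\<And>j. j \<le> h \<Longrightarrow> continuous_on UNIV (A j)"
    and delay_nonneg: "\<And>j. j \<le> h \<Longrightarrow> 0 \<le> \<tau> j"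
    and delay_le_max: "\<And>j. j \<le> h \<Longrightarrow> \<tau> j \<le> \<tau> h"
begin

abbreviation rhs :: "(real \<Rightarrow> complex^'d) \<Rightarrow> real \<Rightarrow> complex^'d" where
  "rhs \<equiv> dde_rhs A h \<tau>"

lemma max_delay_nonneg: "0 \<le> \<tau> h"
  by (rule delay_nonneg) simp

lemma delayed_time_in_window: "j \<le> h \<Longrightarrow> t - \<tau> j \<in> {t - \<tau> h..t}"
  using delay_nonneg[of j] delay_le_max[of j] by simp

lemma coefficient_bound:
  obtains B where "0 \<le> B" "\<And>j t v. j \<le> h \<Longrightarrow> t \<in> {a..b} \<Longrightarrow> norm (cmat (A j t) *v v) \<le> B * norm v"
proof -
  define S where "S t = (\<Sum>j\<le>h. \<Sum>i\<in>UNIV. \<Sum>k\<in>UNIV. \<bar>A j t $ i $ k\<bar>)" for t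
  have "continuous_on {a..b} S"
    unfolding S_def by (intro continuous_intros continuous_on_subset[OF continuous_A]) auto
  then obtain B where B: "0 \<le> B" "\<And>t. t \<in> {a..b} \<Longrightarrow> norm (S t) \<le> B"
    using continuous_on_compact_bound[OF compact_Icc] by blast
  show thesis
  proof (rule that[OF B(1)])
    fix j t and v :: "complex^'d"
    assume j: "j \<le> h" and t: "t \<in> {a..b}"
    have "norm (cmat (A j t) *v v) \<le> (\<Sum>i\<in>UNIV. \<Sum>k\<in>UNIV. \<bar>A j t $ i $ k\<bar>) * norm v"
      using norm_matrix_vector_mult_le[of "cmat (A j t)" v] by (simp add: cmat_def)
    also have "\<dots> \<le> S t * norm v"
      unfolding S_def using j
      by (intro mult_right_mono member_le_sum[of j, where f = "\<lambda>j. \<Sum>i\<in>UNIV. \<Sum>k\<in>UNIV. \<bar>A j t $ i $ k\<bar>"] sum_nonneg) auto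
    also have "\<dots> \<le> B * norm v"
      using B(2)[OF t] by (intro mult_right_mono) auto
    finally show "norm (cmat (A j t) *v v) \<le> B * norm v" .
  qed
qed

lemma rhs_lipschitz:
  obtains K where "0 \<le> K" "\<And>t x y M. t \<in> {a..b} \<Longrightarrow>
    (\<And>r. r \<in> {t - \<tau> h..t} \<Longrightarrow> norm (x r - y r) \<le> M) \<Longrightarrow> norm (rhs x t - rhs y t) \<le> K * M"
proof -
  obtain B where B: "0 \<le> B" "\<And>j t v. j \<le> h \<Longrightarrow> t \<in> {a..b} \<Longrightarrow> norm (cmat (A j t) *v v) \<le> B * norm v"
    using coefficient_bound by blast
  show thesis
  proof (rule that[of "real (Suc h) * B"])
    fix t M and x y :: "real \<Rightarrow> complex^'d"
    assume t: "t \<in> {a..b}" and M: "\<And>r. r \<in> {t - \<tau> h..t} \<Longrightarrow> norm (x r - y r) \<le> M"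
    have "rhs x t - rhs y t = (\<Sum>j\<le>h. cmat (A j t) *v (x (t - \<tau> j) - y (t - \<tau> j)))"
      by (simp add: dde_rhs_def sum_subtractf matrix_vector_mult_diff_distrib)
    also have "norm \<dots> \<le> (\<Sum>j\<le>h. B * M)"
      using B(2)[OF _ t] M delayed_time_in_window B(1)
      by (intro norm_sum[THEN order_trans] sum_mono) (meson atMost_iff mult_left_mono order_trans)
    finally show "norm (rhs x t - rhs y t) \<le> real (Suc h) * B * M" by simp
  qed (use B in simp)
qed

lemma rhs_cong: "(\<And>r. r \<in> {t - \<tau> h..t} \<Longrightarrow> x r = y r) \<Longrightarrow> rhs x t = rhs y t"
  unfolding dde_rhs_def using delayed_time_in_window by (intro sum.cong) auto

lemma continuous_on_rhs:
  assumes "continuous_on {-\<tau> h..b} x" and "0 \<le> a"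
  shows "continuous_on {a..b} (rhs x)"
  unfolding dde_rhs_def[abs_def]
proof (intro continuous_on_sum)
  fix j assume "j \<in> {..h}"
  then have "(\<lambda>t. t - \<tau> j) ` {a..b} \<subseteq> {-\<tau> h..b}"
    using assms(2) delay_nonneg[of j] delay_le_max[of j] by auto
  then show "continuous_on {a..b} (\<lambda>t. cmat (A j t) *v x (t - \<tau> j))"
    unfolding matrix_vector_mult_def cmat_def
    by (intro continuous_intros continuous_on_subset[OF continuous_A] continuous_on_compose2[OF assms(1)])
       (use \<open>j \<in> {..h}\<close> in auto)
qed

lemma solutions_unique_on:
  assumes "continuous_on {-\<tau> h..b} x" "continuous_on {-\<tau> h..b} y"
    and initial: "\<And>\<theta>. \<theta> \<in> {-\<tau> h..0} \<Longrightarrow> x \<theta> = y \<theta>"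
    and "\<And>t. t \<in> {0..b} \<Longrightarrow> (x has_vector_derivative rhs x t) (at t within {0..b})"
    and "\<And>t. t \<in> {0..b} \<Longrightarrow> (y has_vector_derivative rhs y t) (at t within {0..b})"
    and t: "t \<in> {-\<tau> h..b}"
  shows "x t = y t"
proof (cases "t \<le> 0")
  case False
  obtain K where "0 \<le> K" and K: "\<And>t x y M. t \<in> {0..b} \<Longrightarrow>
      (\<And>r. r \<in> {t - \<tau> h..t} \<Longrightarrow> norm (x r - y r) \<le> M) \<Longrightarrow> norm (rhs x t - rhs y t) \<le> K * M"
    using rhs_lipschitz by blast
  have "x t - y t = 0"
  proof (rule eq_0_if_derivatives_bounded_by_past[where I = "{()}" and z = "\<lambda>_ t. x t - y t"
        and z' = "\<lambda>_ t. rhs x t - rhs y t" and a = 0 and b = b and K = K])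
    fix t M
    assume t: "t \<in> {0..b}" and M: "\<And>j r. j \<in> {()} \<Longrightarrow> r \<in> {0..t} \<Longrightarrow> norm (x r - y r) \<le> M"
    have "0 \<le> M" using M[of "()" 0] t by (simp add: order_trans[OF norm_ge_zero])
    show "norm (rhs x t - rhs y t) \<le> K * M"
    proof (rule K[OF t])
      fix r assume "r \<in> {t - \<tau> h..t}"
      then show "norm (x r - y r) \<le> M"
        using M[of "()" r] initial[of r] \<open>0 \<le> M\<close> t by (cases "r \<le> 0") auto
    qed
  next
    have "{0..b} \<subseteq> {-\<tau> h..b}" using max_delay_nonneg by auto
    then show "continuous_on {0..b} (\<lambda>t. x t - y t)"
      by (intro continuous_on_diff continuous_on_subset[OF assms(1)] continuous_on_subset[OF assms(2)])
  next
    fix t assume "t \<in> {0..b}"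
    then show "((\<lambda>t. x t - y t) has_vector_derivative rhs x t - rhs y t) (at t within {0..b})"
      using assms(4,5) by (intro has_vector_derivative_diff)
  qed (use initial t False \<open>0 \<le> K\<close> max_delay_nonneg in simp_all)
  then show ?thesis by simp
qed (use initial t in simp)

definition integral_sol :: "(real \<Rightarrow> complex^'d) \<Rightarrow> real \<Rightarrow> (real \<Rightarrow> complex^'d) \<Rightarrow> bool" where
  "integral_sol \<phi> b x \<longleftrightarrow> continuous_on {-\<tau> h..b} x \<and> (\<forall>\<theta>\<in>{-\<tau> h..0}. x \<theta> = \<phi> \<theta>) \<and>
     (\<forall>t\<in>{0..b}. x t = \<phi> 0 + integral {0..t} (rhs x))"

lemma integral_sol_has_vector_derivative:
  assumes "integral_sol \<phi> b x" and t: "t \<in> {0..b}"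
  shows "(x has_vector_derivative rhs x t) (at t within {0..b})"
proof -
  have "continuous_on {0..b} (rhs x)"
    using assms(1) by (intro continuous_on_rhs) (auto simp: integral_sol_def)
  then have D: "((\<lambda>u. \<phi> 0 + integral {0..u} (rhs x)) has_vector_derivative rhs x t) (at t within {0..b})"
    using integral_has_vector_derivative t by (intro derivative_eq_intros) auto
  show ?thesis
    by (rule has_vector_derivative_transform[OF t _ D]) (use assms(1) in \<open>simp add: integral_sol_def\<close>)
qed

lemma integral_sol_mono:
  assumes "integral_sol \<phi> b x" and "b' \<le> b"
  shows "integral_sol \<phi> b' x"
proof -
  have "{-\<tau> h..b'} \<subseteq> {-\<tau> h..b}" using assms(2) by auto
  then have "continuous_on {-\<tau> h..b'} x"
    using assms(1) unfolding integral_sol_def by (blast intro: continuous_on_subset)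
  then show ?thesis
    using assms unfolding integral_sol_def by simp
qed

lemma integral_sol_unique:
  assumes "integral_sol \<phi> b x" "integral_sol \<phi> b y" and "t \<in> {-\<tau> h..b}"
  shows "x t = y t"
proof (rule solutions_unique_on[of b x y])
  show "continuous_on {-\<tau> h..b} x" "continuous_on {-\<tau> h..b} y"
    and "\<And>\<theta>. \<theta> \<in> {-\<tau> h..0} \<Longrightarrow> x \<theta> = y \<theta>"
    using assms(1,2) by (simp_all add: integral_sol_def)
qed (use assms integral_sol_has_vector_derivative in simp_all)

lemma continuous_on_integral_sol_graft:
  assumes "integral_sol \<phi> c w" and "0 \<le> c" "c \<le> e" and "continuous_on {c..e} u"
  shows "continuous_on {-\<tau> h..e} (graft w c u)"
proof -
  have "continuous_on {-\<tau> h..c} w" using assms(1) by (simp add: integral_sol_def)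
  then show ?thesis
    using continuous_on_graft[OF _ assms(4)] assms(2,3) max_delay_nonneg by simp
qed

lemma integral_sol_graft:
  assumes w: "integral_sol \<phi> c w" and "0 \<le> c" "c \<le> e" and u: "continuous_on {c..e} u"
    and fixpoint: "\<And>t. t \<in> {c..e} \<Longrightarrow> u t = w c + integral {c..t} (rhs (graft w c u))"
  shows "integral_sol \<phi> e (graft w c u)"
proof -
  define x where "x = graft w c u"
  have x_w: "x r = w r" if "r \<le> c" for r
    using that by (simp add: x_def graft_def)
  have x_u: "x r = u r" if "c < r" for r
    using that fixpoint[of c] \<open>c \<le> e\<close> by (simp add: x_def graft_def)
  have x_cont: "continuous_on {-\<tau> h..e} x"
    unfolding x_def using w \<open>0 \<le> c\<close> \<open>c \<le> e\<close> u by (rule continuous_on_integral_sol_graft)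
  have integral_w: "integral {0..t} (rhs w) = integral {0..t} (rhs x)" if "t \<le> c" for t
    using that x_w by (intro integral_cong rhs_cong) auto
  have "x t = \<phi> 0 + integral {0..t} (rhs x)" if t: "t \<in> {0..e}" for t
  proof (cases "t \<le> c")
    case True
    then show ?thesis using w t x_w[of t] integral_w[of t] by (simp add: integral_sol_def)
  next
    case False
    have rhs_x: "continuous_on {0..e} (rhs x)" using x_cont by (rule continuous_on_rhs) simp
    have "rhs x integrable_on {0..t}"
      using t by (intro integrable_continuous_real continuous_on_subset[OF rhs_x]) auto
    then have "integral {0..c} (rhs x) + integral {c..t} (rhs x) = integral {0..t} (rhs x)"
      using Henstock_Kurzweil_Integration.integral_combine[of 0 c t "rhs x"] False \<open>0 \<le> c\<close> by simp
    moreover have "w c = \<phi> 0 + integral {0..c} (rhs x)"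
      using w \<open>0 \<le> c\<close> integral_w[of c] by (simp add: integral_sol_def)
    ultimately show ?thesis
      using fixpoint[of t] x_u[of t] False t by (simp add: x_def add.assoc)
  qed
  then show ?thesis
    using x_cont w x_w \<open>0 \<le> c\<close> by (simp add: integral_sol_def x_def)
qed

lemma integral_sol_extend:
  assumes w: "integral_sol \<phi> c w" and "0 \<le> c" "0 < \<delta>" "0 \<le> K" "K * \<delta> \<le> 1/4"
    and lipschitz: "\<And>t x y M. t \<in> {c..c + \<delta>} \<Longrightarrow>
      (\<And>r. r \<in> {t - \<tau> h..t} \<Longrightarrow> norm (x r - y r) \<le> M) \<Longrightarrow> norm (rhs x t - rhs y t) \<le> K * M"
  shows "\<exists>x. integral_sol \<phi> (c + \<delta>) x"
proof -
  define e where "e = c + \<delta>"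
  have "c \<le> e" using \<open>0 < \<delta>\<close> by (simp add: e_def)
  have rhs_cont: "continuous_on {c..e} (rhs (graft w c u))" if "continuous_on {c..e} u" for u
    using continuous_on_integral_sol_graft[OF w \<open>0 \<le> c\<close> \<open>c \<le> e\<close> that] \<open>0 \<le> c\<close>
    by (rule continuous_on_rhs)
  define \<Phi> where "\<Phi> u t = w c + integral {c..t} (rhs (graft w c u))" for u t
  obtain u where u: "continuous_on {c..e} u" and fixpoint: "\<And>t. t \<in> {c..e} \<Longrightarrow> \<Phi> u t = u t"
  proof (rule contraction_fixpoint_continuous_on_interval[where \<Phi> = \<Phi> and q = "1/2" and a = c and b = e])
    fix u :: "real \<Rightarrow> complex^'d"
    assume "continuous_on {c..e} u"
    then show "continuous_on {c..e} (\<Phi> u)"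
      unfolding \<Phi>_def
      by (intro continuous_intros indefinite_integral_continuous_1 integrable_continuous_real rhs_cont)
  next
    fix u v :: "real \<Rightarrow> complex^'d" and M t
    assume u: "continuous_on {c..e} u" and v: "continuous_on {c..e} v"
      and M: "\<And>r. r \<in> {c..e} \<Longrightarrow> dist (u r) (v r) \<le> M" and t: "t \<in> {c..e}"
    have "0 \<le> M" using M[of c] \<open>c \<le> e\<close> by (simp add: order_trans[OF zero_le_dist])
    have "rhs (graft w c u) integrable_on {c..t}" "rhs (graft w c v) integrable_on {c..t}"
      using t by (auto intro!: integrable_continuous_real continuous_on_subset[OF rhs_cont[OF u]]
          continuous_on_subset[OF rhs_cont[OF v]])
    then have "dist (\<Phi> u t) (\<Phi> v t) = norm (integral {c..t} (\<lambda>s. rhs (graft w c u) s - rhs (graft w c v) s))"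
      by (simp add: \<Phi>_def dist_norm integral_diff)
    also have "\<dots> \<le> K * (2 * M) * (t - c)"
    proof (rule integral_bound)
      show "continuous_on {c..t} (\<lambda>s. rhs (graft w c u) s - rhs (graft w c v) s)"
        using t by (intro continuous_on_diff continuous_on_subset[OF rhs_cont[OF u]]
            continuous_on_subset[OF rhs_cont[OF v]]) auto
      fix s assume "s \<in> {c..t}"
      then show "norm (rhs (graft w c u) s - rhs (graft w c v) s) \<le> K * (2 * M)"
        using t M \<open>0 \<le> M\<close> by (intro lipschitz norm_graft_diff_le) (auto simp: e_def)
    qed (use t in simp)
    also have "\<dots> \<le> 2 * (K * \<delta>) * M"
      using t \<open>0 \<le> K\<close> \<open>0 \<le> M\<close> mult_left_mono[of "t - c" \<delta> "K * (2 * M)"]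
      by (simp add: e_def algebra_simps)
    also have "\<dots> \<le> 1/2 * M"
      using \<open>K * \<delta> \<le> 1/4\<close> \<open>0 \<le> M\<close> by (intro mult_right_mono) simp_all
    finally show "dist (\<Phi> u t) (\<Phi> v t) \<le> 1/2 * M" .
  qed simp_all
  then have "integral_sol \<phi> e (graft w c u)"
    using w \<open>0 \<le> c\<close> \<open>c \<le> e\<close> by (intro integral_sol_graft) (simp_all add: \<Phi>_def)
  then show ?thesis unfolding e_def by blast
qed

lemma integral_sol_exists:
  assumes "continuous_on {-\<tau> h..0} \<phi>" and "0 \<le> b"
  shows "\<exists>x. integral_sol \<phi> b x"
proof -
  obtain K where "0 \<le> K" and lipschitz: "\<And>t x y M. t \<in> {0..b + 1} \<Longrightarrow>
      (\<And>r. r \<in> {t - \<tau> h..t} \<Longrightarrow> norm (x r - y r) \<le> M) \<Longrightarrow> norm (rhs x t - rhs y t) \<le> K * M"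
    using rhs_lipschitz by blast
  define \<delta> where "\<delta> = min 1 (1 / (4 * K + 1))"
  have "0 < \<delta>" "\<delta> \<le> 1" using \<open>0 \<le> K\<close> by (simp_all add: \<delta>_def)
  have "K * \<delta> \<le> K * (1 / (4 * K + 1))"
    using \<open>0 \<le> K\<close> by (intro mult_left_mono) (simp_all add: \<delta>_def)
  also have "\<dots> \<le> 1/4" using \<open>0 \<le> K\<close> by (simp add: field_simps)
  finally have "K * \<delta> \<le> 1/4" .
  have "\<exists>x. integral_sol \<phi> (min b (real k * \<delta>)) x" for k
  proof (induction k)
    case 0
    have "integral_sol \<phi> 0 \<phi>" using assms(1) by (simp add: integral_sol_def)
    then show ?case using \<open>0 \<le> b\<close> by auto
  next
    case (Suc k)
    define c where "c = min b (real k * \<delta>)"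
    obtain w where "integral_sol \<phi> c w" using Suc.IH by (auto simp: c_def)
    moreover have "0 \<le> c" using \<open>0 \<le> b\<close> \<open>0 < \<delta>\<close> by (simp add: c_def)
    moreover have "{c..c + \<delta>} \<subseteq> {0..b + 1}"
      using \<open>0 \<le> c\<close> \<open>\<delta> \<le> 1\<close> by (auto simp: c_def)
    ultimately obtain x where "integral_sol \<phi> (c + \<delta>) x"
      using integral_sol_extend[of \<phi> c _ \<delta> K] \<open>0 < \<delta>\<close> \<open>0 \<le> K\<close> \<open>K * \<delta> \<le> 1/4\<close> lipschitz
      by (metis subsetD)
    moreover have "min b (real (Suc k) * \<delta>) \<le> c + \<delta>"
      using \<open>0 < \<delta>\<close> by (simp add: c_def algebra_simps min_def)
    ultimately show ?case using integral_sol_mono by blast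
  qed
  moreover obtain k :: nat where "b / \<delta> \<le> real k" using real_arch_simple by blast
  then have "min b (real k * \<delta>) = b" using \<open>0 < \<delta>\<close> by (simp add: field_simps)
  ultimately show ?thesis by metis
qed

lemma dde_sol_unique:
  assumes x: "dde_sol A h \<tau> \<phi> x" and y: "dde_sol A h \<tau> \<phi> y" and "-\<tau> h \<le> t"
  shows "x t = y t"
proof (rule solutions_unique_on[of "max t 0" x y])
  have sub: "{-\<tau> h..max t 0} \<subseteq> {-\<tau> h..}" "{0..max t 0} \<subseteq> {0..}" by auto
  show "continuous_on {-\<tau> h..max t 0} x" "continuous_on {-\<tau> h..max t 0} y"
    using x y continuous_on_subset[OF _ sub(1)] by (auto simp: dde_sol_def)
  show "(x has_vector_derivative rhs x s) (at s within {0..max t 0})"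
    and "(y has_vector_derivative rhs y s) (at s within {0..max t 0})" if "s \<in> {0..max t 0}" for s
    using x y that by (auto simp: dde_sol_def intro: has_vector_derivative_within_subset[OF _ sub(2)])
qed (use x y \<open>-\<tau> h \<le> t\<close> in \<open>auto simp: dde_sol_def\<close>)

lemma dde_sol_exists:
  assumes "continuous_on {-\<tau> h..0} \<phi>"
  shows "\<exists>x. dde_sol A h \<tau> \<phi> x"
proof -
  have "\<forall>n::nat. \<exists>x. integral_sol \<phi> (real n) x"
    using integral_sol_exists[OF assms] by simp
  then obtain S where S: "\<And>n. integral_sol \<phi> (real n) (S n)" by metis
  define x where "x t = S (nat \<lceil>t\<rceil> + 1) t" for t
  have x_S: "x t = S n t" if "t \<in> {-\<tau> h..real n}" for t n
  proof -
    define m where "m = nat \<lceil>t\<rceil> + 1"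
    have "t \<le> real m" unfolding m_def by linarith
    then show ?thesis
      using integral_sol_unique[OF integral_sol_mono[OF S[of m]] integral_sol_mono[OF S[of n]], of "min (real m) (real n)" t]
        that by (simp add: x_def m_def)
  qed
  have local: "at t within {a..} = at t within {a..real (nat \<lceil>t\<rceil> + 1)}" for a t :: real
    by (rule at_within_atLeast_eq_atLeastAtMost) linarith
  have "continuous (at t within {-\<tau> h..}) x" if "t \<in> {-\<tau> h..}" for t
  proof -
    define n where "n = nat \<lceil>t\<rceil> + 1"
    have "continuous_on {-\<tau> h..real n} (S n)" using S[of n] by (simp add: integral_sol_def)
    then have "continuous_on {-\<tau> h..real n} x"
      by (rule continuous_on_eq) (simp add: x_S[symmetric])
    moreover have "t \<in> {-\<tau> h..real n}" using that unfolding n_def by auto linarith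
    ultimately show ?thesis
      unfolding local n_def continuous_on_eq_continuous_within by simp
  qed
  moreover have "(x has_vector_derivative rhs x t) (at t within {0..})" if "0 \<le> t" for t
  proof -
    define n where "n = nat \<lceil>t\<rceil> + 1"
    have t: "t \<in> {0..real n}" using that unfolding n_def by auto linarith
    have "rhs (S n) t = rhs x t"
      using t x_S[of _ n] by (intro rhs_cong) auto
    then have "(S n has_vector_derivative rhs x t) (at t within {0..real n})"
      using integral_sol_has_vector_derivative[OF S t] by simp
    then have "(x has_vector_derivative rhs x t) (at t within {0..real n})"
      by (rule has_vector_derivative_transform[OF t, rotated]) (use x_S max_delay_nonneg in auto)
    then show ?thesis unfolding local n_def .
  qed
  moreover have "\<forall>\<theta>\<in>{-\<tau> h..0}. x \<theta> = \<phi> \<theta>"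
    using S[of 0] x_S[of _ 0] by (simp add: integral_sol_def)
  ultimately show ?thesis
    unfolding dde_sol_def continuous_on_eq_continuous_within by blast
qed

end

section \<open>Floquet multipliers and the block boundary value problem\<close>

locale periodic_delay_system = delay_system A h \<tau> for A :: "nat \<Rightarrow> real \<Rightarrow> real^'d^'d" and h \<tau> +
  fixes T \<Delta> :: real and N :: nat and n :: "nat \<Rightarrow> int"
  assumes step_pos: "0 < \<Delta>" and N_pos: "0 < N" and T_eq: "T = real N * \<Delta>"
    and delay_on_grid: "\<And>j. j \<le> h \<Longrightarrow> \<tau> j = of_int (n j) * \<Delta>"
    and periodic: "\<And>j t. j \<le> h \<Longrightarrow> A j (t + T) = A j t"
begin

lemma period_pos: "0 < T"
  using step_pos N_pos by (simp add: T_eq)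

lemma periodic_int: "j \<le> h \<Longrightarrow> A j (t + of_int a * T) = A j t"
proof -
  assume j: "j \<le> h"
  have nat: "A j (t + real m * T) = A j t" for t m
  proof (induction m)
    case (Suc m)
    have "t + real (Suc m) * T = (t + real m * T) + T" by (simp add: algebra_simps)
    then show ?case using periodic[OF j, of "t + real m * T"] Suc.IH by (simp only:)
  qed simp
  show ?thesis
  proof (cases "0 \<le> a")
    case True
    then show ?thesis using nat[of t "nat a"] by simp
  next
    case False
    then show ?thesis using nat[of "t + of_int a * T" "nat (- a)"] by simp
  qed
qed

lemma monodromy_eq:
  assumes x: "dde_sol A h \<tau> \<phi> x"
  shows "monodromy A h \<tau> T \<phi> = (\<lambda>\<theta>. if \<theta> \<in> {-\<tau> h..0} then x (T + \<theta>) else 0)"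
  unfolding monodromy_def
proof (rule the_equality)
  fix y assume "\<exists>x'. dde_sol A h \<tau> \<phi> x' \<and> y = (\<lambda>\<theta>. if \<theta> \<in> {-\<tau> h..0} then x' (T + \<theta>) else 0)"
  then obtain x' where x': "dde_sol A h \<tau> \<phi> x'"
    and y: "y = (\<lambda>\<theta>. if \<theta> \<in> {-\<tau> h..0} then x' (T + \<theta>) else 0)" by blast
  have "x' (T + \<theta>) = x (T + \<theta>)" if "\<theta> \<in> {-\<tau> h..0}" for \<theta>
    using that period_pos by (intro dde_sol_unique[OF x' x]) auto
  then show "y = (\<lambda>\<theta>. if \<theta> \<in> {-\<tau> h..0} then x (T + \<theta>) else 0)"
    by (auto simp: y)
qed (use x in blast)

lemma eigen_solution_quasiperiodic:
  assumes x: "dde_sol A h \<tau> \<phi> x" and "\<mu> \<noteq> 0"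
    and eigen: "\<And>\<theta>. \<theta> \<in> {-\<tau> h..0} \<Longrightarrow> x (T + \<theta>) = \<mu> *s x \<theta>"
    and t: "-\<tau> h \<le> t"
  shows "x (t + T) = \<mu> *s x t"
proof -
  define y where "y t = inverse \<mu> *s x (t + T)" for t
  have "dde_sol A h \<tau> \<phi> y"
    unfolding dde_sol_def
  proof (intro conjI allI impI ballI)
    have "continuous_on {-\<tau> h..} x" using x by (simp add: dde_sol_def)
    then have "continuous_on {-\<tau> h..} (\<lambda>t. x (t + T))"
      by (rule continuous_on_compose2) (use period_pos in \<open>auto intro!: continuous_intros\<close>)
    then show "continuous_on {-\<tau> h..} y"
      unfolding y_def by (rule bounded_linear.continuous_on[OF bounded_linear_vector_smult])
  next
    fix \<theta> assume "\<theta> \<in> {-\<tau> h..0}"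
    then show "y \<theta> = \<phi> \<theta>"
      using x eigen[of \<theta>] \<open>\<mu> \<noteq> 0\<close> by (simp add: y_def dde_sol_def add.commute vector_smult_assoc)
  next
    fix t :: real assume "0 \<le> t"
    then have "(x has_vector_derivative rhs x (t + T)) (at (t + T) within {0..})"
      using x period_pos by (simp add: dde_sol_def)
    moreover have "(\<lambda>s. s + T) ` {0..} \<subseteq> {0::real..}" using period_pos by auto
    ultimately have Dx: "(x has_vector_derivative rhs x (t + T)) (at (t + T) within (\<lambda>s. s + T) ` {0..})"
      by (rule has_vector_derivative_within_subset)
    have "((\<lambda>s. s + T) has_vector_derivative 1) (at t within {0..})"
      by (auto intro!: derivative_eq_intros)
    from vector_diff_chain_within[OF this Dx]
    have "((x \<circ> (\<lambda>s. s + T)) has_vector_derivative 1 *\<^sub>R rhs x (t + T)) (at t within {0..})" .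
    then have "(y has_vector_derivative inverse \<mu> *s rhs x (t + T)) (at t within {0..})"
      unfolding y_def using has_vector_derivative_vector_smult by (simp add: o_def)
    moreover have "inverse \<mu> *s rhs x (t + T) = rhs y t"
      unfolding dde_rhs_def vector_smult_sum
    proof (rule sum.cong)
      fix j assume "j \<in> {..h}"
      then have "A j (t + T) = A j t" by (simp add: periodic)
      moreover have "t + T - \<tau> j = t - \<tau> j + T" by simp
      ultimately show "inverse \<mu> *s (cmat (A j (t + T)) *v x (t + T - \<tau> j)) = cmat (A j t) *v y (t - \<tau> j)"
        by (simp only: y_def vector_scalar_commute)
    qed simp
    ultimately show "(y has_vector_derivative rhs y t) (at t within {0..})" by simp
  qed
  then have "\<mu> *s y t = \<mu> *s x t" by (simp add: dde_sol_unique[OF _ x t])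
  then show ?thesis using \<open>\<mu> \<noteq> 0\<close> by (simp add: y_def vector_smult_assoc)
qed

lemma quasiperiodic_powi:
  fixes x :: "real \<Rightarrow> complex^'d"
  assumes qp: "\<And>t. -\<tau> h \<le> t \<Longrightarrow> x (t + T) = \<mu> *s x t" and "\<mu> \<noteq> 0"
    and "-\<tau> h \<le> t" "-\<tau> h \<le> t + of_int a * T"
  shows "x (t + of_int a * T) = (\<mu> powi a) *s x t"
proof -
  have nat: "x (t + real m * T) = (\<mu> ^ m) *s x t" if "-\<tau> h \<le> t" for t m
  proof (induction m)
    case (Suc m)
    have "0 \<le> real m * T" using period_pos by simp
    then have "-\<tau> h \<le> t + real m * T" using that by linarith
    have "x (t + real (Suc m) * T) = x (t + real m * T + T)" by (simp add: algebra_simps)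
    also have "\<dots> = \<mu> *s x (t + real m * T)" by (rule qp) fact
    also have "\<dots> = (\<mu> ^ Suc m) *s x t" using Suc.IH by (simp add: vector_smult_assoc)
    finally show ?case .
  qed simp
  show ?thesis
  proof (cases "0 \<le> a")
    case True
    then show ?thesis using nat[OF \<open>-\<tau> h \<le> t\<close>, of "nat a"] by (simp add: power_int_def)
  next
    case False
    then have "x t = (\<mu> ^ nat (- a)) *s x (t + of_int a * T)"
      using nat[OF assms(4), of "nat (- a)"] by simp
    then show ?thesis
      using False \<open>\<mu> \<noteq> 0\<close> by (simp add: power_int_def vector_smult_assoc field_simps)
  qed
qed

lemma quasiperiodic_at_lattice_point:
  fixes x :: "real \<Rightarrow> complex^'d"
  assumes qp: "\<And>t. -\<tau> h \<le> t \<Longrightarrow> x (t + T) = \<mu> *s x t" and "\<mu> \<noteq> 0"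
    and s: "s \<in> {0..1}" and k: "-\<tau> h \<le> (s + of_int k - 1) * \<Delta>"
  shows "x ((s + of_int k - 1) * \<Delta>) = (\<mu> powi idx_a N k) *s x ((s + real (idx_b N k) - 1) * \<Delta>)"
proof -
  have "(s + of_int k - 1) * \<Delta> = (s + real (idx_b N k) - 1) * \<Delta> + of_int (idx_a N k) * T"
    using arg_cong[OF idx_decomp[OF N_pos, of k], of real_of_int] by (simp add: T_eq algebra_simps)
  moreover have "0 \<le> (s + real (idx_b N k) - 1) * \<Delta>"
    using idx_b_range[OF N_pos, of k] s step_pos by simp
  ultimately show ?thesis
    using quasiperiodic_powi[where x = x and \<mu> = \<mu>, OF qp \<open>\<mu> \<noteq> 0\<close>] k max_delay_nonneg by simp
qed

lemma rhs_at_lattice_point: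
  fixes \<mu> :: complex
  assumes lattice: "\<And>k'. (s + of_int k' - 1) * \<Delta> \<in> {(s + of_int k - 1) * \<Delta> - \<tau> h..(s + of_int k - 1) * \<Delta>}
      \<Longrightarrow> x ((s + of_int k' - 1) * \<Delta>) = (\<mu> powi idx_a N k') *s q (idx_b N k') s"
  shows "rhs x ((s + of_int k - 1) * \<Delta>) = (\<Sum>j\<le>h. cmat (A j ((s + of_int k - 1) * \<Delta>)) *v
      ((\<mu> powi idx_a N (k - n j)) *s q (idx_b N (k - n j)) s))"
  unfolding dde_rhs_def
proof (rule sum.cong)
  fix j assume "j \<in> {..h}"
  then have "(s + of_int k - 1) * \<Delta> - \<tau> j = (s + of_int (k - n j) - 1) * \<Delta>"
    using delay_on_grid[of j] by (simp add: algebra_simps)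
  moreover have "(s + of_int k - 1) * \<Delta> - \<tau> j \<in> {(s + of_int k - 1) * \<Delta> - \<tau> h..(s + of_int k - 1) * \<Delta>}"
    using \<open>j \<in> {..h}\<close> by (intro delayed_time_in_window) simp
  ultimately show "cmat (A j ((s + of_int k - 1) * \<Delta>)) *v x ((s + of_int k - 1) * \<Delta> - \<tau> j) =
      cmat (A j ((s + of_int k - 1) * \<Delta>)) *v ((\<mu> powi idx_a N (k - n j)) *s q (idx_b N (k - n j)) s)"
    using lattice[of "k - n j"] by simp
qed simp

text \<open>The \<open>m\<close>-th block of the paper's \<open>A(s, \<mu>) q(s)\<close>, divided by \<open>\<Delta>\<close>.\<close>

definition block_field :: "complex \<Rightarrow> (nat \<Rightarrow> real \<Rightarrow> complex^'d) \<Rightarrow> nat \<Rightarrow> real \<Rightarrow> complex^'d" where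
  "block_field \<mu> q m s = (\<Sum>j\<le>h. cmat (A j ((s + real m - 1) * \<Delta>)) *v
     ((\<mu> powi idx_a N (int m - n j)) *s q (idx_b N (int m - n j)) s))"

lemma floquet_bvp_iff:
  "floquet_bvp A h n N \<Delta> \<mu> q \<longleftrightarrow>
     (\<forall>m\<in>{1..N}. continuous_on {0..1} (q m)) \<and> (\<exists>m\<in>{1..N}. q m 0 \<noteq> 0) \<and>
     (\<forall>m\<in>{1..N}. \<forall>s\<in>{0..1}.
        (q m has_vector_derivative of_real \<Delta> *s block_field \<mu> q m s) (at s within {0..1})) \<and>
     (\<forall>m\<in>{1..N}. q m 1 = (if m < N then q (m + 1) 0 else \<mu> *s q 1 0))"
  by (simp add: floquet_bvp_def block_field_def)

lemma cut_blocks_has_vector_derivative: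
  assumes x: "dde_sol A h \<tau> \<phi> x" and "\<mu> \<noteq> 0"
    and qp: "\<And>t. -\<tau> h \<le> t \<Longrightarrow> x (t + T) = \<mu> *s x t"
    and m: "m \<in> {1..N}" and s: "s \<in> {0..1}"
  shows "(cut_blocks \<Delta> x m has_vector_derivative of_real \<Delta> *s block_field \<mu> (cut_blocks \<Delta> x) m s)
    (at s within {0..1})"
proof -
  define f where "f s = (s + real m - 1) * \<Delta>" for s
  have f_nonneg: "0 \<le> f s" if "s \<in> {0..1}" for s using m that step_pos by (simp add: f_def)
  have "(x has_vector_derivative rhs x (f s)) (at (f s) within {0..})"
    using x f_nonneg[OF s] by (simp add: dde_sol_def)
  then have Dx: "(x has_vector_derivative rhs x (f s)) (at (f s) within f ` {0..1})"
    by (rule has_vector_derivative_within_subset) (use f_nonneg in auto)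
  have "(f has_vector_derivative \<Delta>) (at s within {0..1})"
    unfolding f_def by (auto intro!: derivative_eq_intros)
  from vector_diff_chain_within[OF this Dx]
  have "(cut_blocks \<Delta> x m has_vector_derivative \<Delta> *\<^sub>R rhs x (f s)) (at s within {0..1})"
    by (simp add: o_def f_def cut_blocks_def[abs_def])
  moreover have "rhs x (f s) = block_field \<mu> (cut_blocks \<Delta> x) m s"
    using rhs_at_lattice_point[of s "int m" x \<mu> "cut_blocks \<Delta> x"] f_nonneg[OF s]
      quasiperiodic_at_lattice_point[where x = x and \<mu> = \<mu>, OF qp \<open>\<mu> \<noteq> 0\<close> s]
    by (simp add: f_def block_field_def cut_blocks_def)
  ultimately show ?thesis by (simp add: scaleR_eq_of_real_vector_smult)
qed

lemma block_field_bound: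
  obtains K where "0 \<le> K" and "\<And>q m s M. m \<in> {1..N} \<Longrightarrow> s \<in> {0..1} \<Longrightarrow>
    (\<And>b. b \<in> {1..N} \<Longrightarrow> norm (q b s) \<le> M) \<Longrightarrow> norm (block_field \<mu> q m s) \<le> K * M"
proof -
  obtain B where "0 \<le> B"
    and B: "\<And>j t v. j \<le> h \<Longrightarrow> t \<in> {0..T} \<Longrightarrow> norm (cmat (A j t) *v v) \<le> B * norm v"
    using coefficient_bound by blast
  define P where "P = insert 0 ((\<lambda>(m, j). norm (\<mu> powi idx_a N (int m - n j))) ` ({1..N} \<times> {..h}))"
  define C where "C = Max P"
  have "finite P" by (simp add: P_def)
  then have "0 \<le> C" unfolding C_def by (rule Max_ge) (simp add: P_def)
  have C: "norm (\<mu> powi idx_a N (int m - n j)) \<le> C" if "m \<in> {1..N}" "j \<le> h" for m j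
    unfolding C_def using \<open>finite P\<close> by (rule Max_ge) (use that in \<open>force simp: P_def\<close>)
  show thesis
  proof (rule that[of "real (Suc h) * B * C"])
    fix q :: "nat \<Rightarrow> real \<Rightarrow> complex^'d" and m s M
    assume m: "m \<in> {1..N}" and s: "s \<in> {0..1}" and M: "\<And>b. b \<in> {1..N} \<Longrightarrow> norm (q b s) \<le> M"
    have t: "(s + real m - 1) * \<Delta> \<in> {0..T}"
      using m s step_pos by (auto simp: T_eq intro!: mult_right_mono)
    have "norm (block_field \<mu> q m s) \<le> (\<Sum>j\<le>h. B * (C * M))"
      unfolding block_field_def
    proof (intro norm_sum[THEN order_trans] sum_mono)
      fix j assume j: "j \<in> {..h}"
      let ?v = "(\<mu> powi idx_a N (int m - n j)) *s q (idx_b N (int m - n j)) s"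
      have "norm (cmat (A j ((s + real m - 1) * \<Delta>)) *v ?v) \<le> B * norm ?v"
        using B[OF _ t] j by simp
      also have "\<dots> \<le> B * (C * M)"
        using C[OF m] j M[OF idx_b_range[OF N_pos]] \<open>0 \<le> B\<close> \<open>0 \<le> C\<close>
        by (simp add: norm_vector_smult mult_left_mono mult_mono)
      finally show "norm (cmat (A j ((s + real m - 1) * \<Delta>)) *v ?v) \<le> B * (C * M)" .
    qed
    then show "norm (block_field \<mu> q m s) \<le> real (Suc h) * B * C * M" by (simp add: mult.assoc)
  qed (use \<open>0 \<le> B\<close> \<open>0 \<le> C\<close> in simp)
qed

lemma block_system_zero_if_zero_initial:
  fixes q :: "nat \<Rightarrow> real \<Rightarrow> complex^'d"
  assumes cont: "\<And>m. m \<in> {1..N} \<Longrightarrow> continuous_on {0..1} (q m)"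
    and deriv: "\<And>m s. m \<in> {1..N} \<Longrightarrow> s \<in> {0..1} \<Longrightarrow>
      (q m has_vector_derivative of_real \<Delta> *s block_field \<mu> q m s) (at s within {0..1})"
    and zero: "\<And>m. m \<in> {1..N} \<Longrightarrow> q m 0 = 0"
    and "m \<in> {1..N}" "s \<in> {0..1}"
  shows "q m s = 0"
proof -
  obtain K where "0 \<le> K" and K: "\<And>m s M. m \<in> {1..N} \<Longrightarrow> s \<in> {0..1} \<Longrightarrow>
      (\<And>b. b \<in> {1..N} \<Longrightarrow> norm (q b s) \<le> M) \<Longrightarrow> norm (block_field \<mu> q m s) \<le> K * M"
    using block_field_bound by metis
  show ?thesis
  proof (rule eq_0_if_derivatives_bounded_by_past[where I = "{1..N}" and z = q and a = 0 and b = 1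
        and K = "\<Delta> * K"])
    fix m s M
    assume "m \<in> {1..N}" "s \<in> {0..1}"
      and "\<And>b r. b \<in> {1..N} \<Longrightarrow> r \<in> {0..s} \<Longrightarrow> norm (q b r) \<le> M"
    then have "norm (block_field \<mu> q m s) \<le> K * M" by (intro K) auto
    then show "norm (of_real \<Delta> *s block_field \<mu> q m s) \<le> \<Delta> * K * M"
      using step_pos by (simp add: norm_vector_smult mult.assoc)
  qed (use assms step_pos \<open>0 \<le> K\<close> in simp_all)
qed

lemma continuous_on_cut_blocks:
  assumes "continuous_on {-\<tau> h..} x" and "1 \<le> m"
  shows "continuous_on {0..1} (cut_blocks \<Delta> x m)"
proof -
  have "(s + real m - 1) * \<Delta> \<in> {-\<tau> h..}" if "s \<in> {0..1}" for s
    using assms(2) that step_pos max_delay_nonneg by (simp add: order_trans[OF _ mult_nonneg_nonneg])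
  then show ?thesis
    unfolding cut_blocks_def[abs_def] by (intro continuous_on_compose2[OF assms(1)] continuous_intros) auto
qed

lemma quasiperiodic_eq_0_if_blocks_eq_0:
  fixes x :: "real \<Rightarrow> complex^'d"
  assumes qp: "\<And>t. -\<tau> h \<le> t \<Longrightarrow> x (t + T) = \<mu> *s x t" and "\<mu> \<noteq> 0"
    and zero: "\<And>m s. m \<in> {1..N} \<Longrightarrow> s \<in> {0..1} \<Longrightarrow> cut_blocks \<Delta> x m s = 0"
    and "-\<tau> h \<le> t"
  shows "x t = 0"
proof -
  define s k where "s = frac (t / \<Delta>)" and "k = \<lfloor>t / \<Delta>\<rfloor> + 1"
  have t: "t = (s + of_int k - 1) * \<Delta>"
    unfolding s_def k_def by (rule lattice_point_decomp[OF step_pos])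
  have "s \<in> {0..1}" using frac_lt_1[of "t / \<Delta>"] by (simp add: s_def less_imp_le)
  then show ?thesis
    using quasiperiodic_at_lattice_point[where x = x and \<mu> = \<mu>, OF qp \<open>\<mu> \<noteq> 0\<close>, of s k]
      zero[OF idx_b_range[OF N_pos]] \<open>-\<tau> h \<le> t\<close> by (simp add: t cut_blocks_def)
qed

lemma floquet_bvp_solvable_if_multiplier:
  assumes "floquet_multiplier A h \<tau> T \<mu>"
  shows "\<exists>q. floquet_bvp A h n N \<Delta> \<mu> q"
proof -
  obtain \<phi> \<theta> where "\<mu> \<noteq> 0" and \<phi>: "continuous_on {-\<tau> h..0} \<phi>" and \<theta>: "\<theta> \<in> {-\<tau> h..0}" "\<phi> \<theta> \<noteq> 0"
    and eigen: "\<And>\<theta>. \<theta> \<in> {-\<tau> h..0} \<Longrightarrow> monodromy A h \<tau> T \<phi> \<theta> = \<mu> *s \<phi> \<theta>"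
    using assms unfolding floquet_multiplier_def by blast
  obtain x where x: "dde_sol A h \<tau> \<phi> x" using dde_sol_exists[OF \<phi>] by blast
  have qp: "x (t + T) = \<mu> *s x t" if "-\<tau> h \<le> t" for t
    using eigen_solution_quasiperiodic[OF x \<open>\<mu> \<noteq> 0\<close> _ that] eigen x
    by (simp add: monodromy_eq dde_sol_def)
  define q where "q = cut_blocks \<Delta> x"
  have cont: "continuous_on {0..1} (q m)" if "m \<in> {1..N}" for m
    unfolding q_def using x that by (intro continuous_on_cut_blocks) (auto simp: dde_sol_def)
  have deriv: "(q m has_vector_derivative of_real \<Delta> *s block_field \<mu> q m s) (at s within {0..1})"
    if "m \<in> {1..N}" "s \<in> {0..1}" for m s
    unfolding q_def using x \<open>\<mu> \<noteq> 0\<close> qp that by (rule cut_blocks_has_vector_derivative)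
  have "q m 1 = (if m < N then q (m + 1) 0 else \<mu> *s q 1 0)" if "m \<in> {1..N}" for m
    using qp[of 0] that max_delay_nonneg by (auto simp: q_def cut_blocks_def T_eq)
  moreover have "\<exists>m\<in>{1..N}. q m 0 \<noteq> 0"
  proof (rule ccontr)
    assume "\<not> (\<exists>m\<in>{1..N}. q m 0 \<noteq> 0)"
    then have "x \<theta> = 0"
      using block_system_zero_if_zero_initial[OF cont deriv] \<theta>(1)
      by (intro quasiperiodic_eq_0_if_blocks_eq_0[where x = x and \<mu> = \<mu>, OF qp \<open>\<mu> \<noteq> 0\<close>])
        (auto simp: q_def)
    then show False using x \<theta> by (simp add: dde_sol_def)
  qed
  ultimately show ?thesis
    unfolding floquet_bvp_iff using cont deriv by blast
qed

lemma glue_blocks_at_lattice_point_if_boundary: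
  assumes "\<mu> \<noteq> 0"
    and boundary: "\<And>m. m \<in> {1..N} \<Longrightarrow> q m 1 = (if m < N then q (m + 1) 0 else \<mu> *s q 1 0)"
    and s: "s \<in> {0..1}"
  shows "glue_blocks N \<Delta> \<mu> q ((s + of_int k - 1) * \<Delta>) = (\<mu> powi idx_a N k) *s q (idx_b N k) s"
proof (cases "s < 1")
  case True
  then show ?thesis using s step_pos by (simp add: glue_blocks_at_lattice_point)
next
  case False
  then have "s = 1" using s by simp
  define a b where "a = idx_a N k" and "b = idx_b N k"
  have b: "b \<in> {1..N}" and k: "k = a * int N + int b"
    using idx_b_range[OF N_pos] idx_decomp[OF N_pos] by (simp_all add: a_def b_def)
  have "glue_blocks N \<Delta> \<mu> q ((s + of_int k - 1) * \<Delta>) = glue_blocks N \<Delta> \<mu> q ((0 + of_int (k + 1) - 1) * \<Delta>)"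
    using \<open>s = 1\<close> by (simp add: algebra_simps)
  also have "\<dots> = (\<mu> powi idx_a N (k + 1)) *s q (idx_b N (k + 1)) 0"
    using step_pos by (rule glue_blocks_at_lattice_point) simp_all
  also have "\<dots> = (\<mu> powi a) *s q b 1"
  proof (cases "b < N")
    case True
    then have "idx_a N (k + 1) = a" "idx_b N (k + 1) = b + 1"
      using idx_eqI[of "b + 1" N "k + 1" a] b k by simp_all
    then show ?thesis using boundary[OF b] True by simp
  next
    case False
    then have "b = N" using b by simp
    then have "idx_a N (k + 1) = a + 1" "idx_b N (k + 1) = 1"
      using idx_eqI[of 1 N "k + 1" "a + 1"] N_pos k by (simp_all add: algebra_simps)
    then show ?thesis
      using boundary[OF b] \<open>b = N\<close> \<open>\<mu> \<noteq> 0\<close> by (simp add: power_int_add_1 vector_smult_assoc)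
  qed
  finally show ?thesis using \<open>s = 1\<close> by (simp add: a_def b_def)
qed

lemma rhs_glue_blocks:
  assumes "\<mu> \<noteq> 0"
    and boundary: "\<And>m. m \<in> {1..N} \<Longrightarrow> q m 1 = (if m < N then q (m + 1) 0 else \<mu> *s q 1 0)"
    and s: "s \<in> {0..1}"
  shows "rhs (glue_blocks N \<Delta> \<mu> q) ((s + of_int k - 1) * \<Delta>) =
    (\<mu> powi idx_a N k) *s block_field \<mu> q (idx_b N k) s"
proof -
  define a b where "a = idx_a N k" and "b = idx_b N k"
  have k: "k = a * int N + int b"
    using idx_decomp[OF N_pos] by (simp add: a_def b_def)
  have "rhs (glue_blocks N \<Delta> \<mu> q) ((s + of_int k - 1) * \<Delta>) = (\<Sum>j\<le>h. cmat (A j ((s + of_int k - 1) * \<Delta>)) *v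
      ((\<mu> powi idx_a N (k - n j)) *s q (idx_b N (k - n j)) s))"
    using glue_blocks_at_lattice_point_if_boundary[OF \<open>\<mu> \<noteq> 0\<close> boundary s]
    by (intro rhs_at_lattice_point) simp
  also have "\<dots> = (\<mu> powi a) *s block_field \<mu> q b s"
    unfolding block_field_def vector_smult_sum
  proof (rule sum.cong)
    fix j assume "j \<in> {..h}"
    have "(s + of_int k - 1) * \<Delta> = (s + real b - 1) * \<Delta> + of_int a * T"
      by (simp add: k T_eq algebra_simps)
    then have "A j ((s + of_int k - 1) * \<Delta>) = A j ((s + real b - 1) * \<Delta>)"
      using periodic_int \<open>j \<in> {..h}\<close> by simp
    moreover have e: "k - n j = (int b - n j) + a * int N" by (simp add: k)
    have "idx_a N (k - n j) = idx_a N (int b - n j) + a" "idx_b N (k - n j) = idx_b N (int b - n j)"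
      unfolding e by (rule idx_shift[OF N_pos])+
    ultimately show "cmat (A j ((s + of_int k - 1) * \<Delta>)) *v ((\<mu> powi idx_a N (k - n j)) *s q (idx_b N (k - n j)) s) =
        (\<mu> powi a) *s (cmat (A j ((s + real b - 1) * \<Delta>)) *v
          ((\<mu> powi idx_a N (int b - n j)) *s q (idx_b N (int b - n j)) s))"
      using \<open>\<mu> \<noteq> 0\<close> by (simp add: power_int_add vector_scalar_commute vector_smult_assoc mult.commute)
  qed simp
  finally show ?thesis by (simp add: a_def b_def)
qed

lemma glue_blocks_on_cell:
  assumes "\<mu> \<noteq> 0"
    and boundary: "\<And>m. m \<in> {1..N} \<Longrightarrow> q m 1 = (if m < N then q (m + 1) 0 else \<mu> *s q 1 0)"
    and u: "u \<in> {of_int k * \<Delta>..(of_int k + 1) * \<Delta>}"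
  shows "glue_blocks N \<Delta> \<mu> q u = (\<mu> powi idx_a N (k + 1)) *s q (idx_b N (k + 1)) (u / \<Delta> - of_int k)"
proof -
  have "u / \<Delta> - of_int k \<in> {0..1}" using u step_pos by (auto simp: field_simps)
  moreover have "u = (u / \<Delta> - of_int k + of_int (k + 1) - 1) * \<Delta>" using step_pos by simp
  ultimately show ?thesis
    by (metis glue_blocks_at_lattice_point_if_boundary[OF \<open>\<mu> \<noteq> 0\<close> boundary])
qed

lemma glue_blocks_has_vector_derivative:
  assumes "\<mu> \<noteq> 0"
    and deriv: "\<And>m s. m \<in> {1..N} \<Longrightarrow> s \<in> {0..1} \<Longrightarrow>
      (q m has_vector_derivative of_real \<Delta> *s block_field \<mu> q m s) (at s within {0..1})"
    and boundary: "\<And>m. m \<in> {1..N} \<Longrightarrow> q m 1 = (if m < N then q (m + 1) 0 else \<mu> *s q 1 0)"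
  shows "(glue_blocks N \<Delta> \<mu> q has_vector_derivative rhs (glue_blocks N \<Delta> \<mu> q) t) (at t)"
proof (rule has_vector_derivative_on_grid[OF step_pos])
  fix k :: int and t
  let ?cell = "{of_int k * \<Delta>..(of_int k + 1) * \<Delta>}"
  define a b f where "a = idx_a N (k + 1)" and "b = idx_b N (k + 1)" and "f u = u / \<Delta> - of_int k" for u
  assume t: "t \<in> ?cell"
  have f_cell: "f ` ?cell \<subseteq> {0..1}" using step_pos by (auto simp: f_def field_simps)
  then have ft: "f t \<in> {0..1}" using t by blast
  have b: "b \<in> {1..N}" using idx_b_range[OF N_pos] by (simp add: b_def)
  have "(f has_vector_derivative 1 / \<Delta>) (at t within ?cell)"
    unfolding f_def by (auto intro!: derivative_eq_intros)
  moreover have "(q b has_vector_derivative of_real \<Delta> *s block_field \<mu> q b (f t)) (at (f t) within f ` ?cell)"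
    by (rule has_vector_derivative_within_subset[OF deriv[OF b ft] f_cell])
  ultimately have "((q b \<circ> f) has_vector_derivative (1 / \<Delta>) *\<^sub>R (of_real \<Delta> *s block_field \<mu> q b (f t)))
      (at t within ?cell)"
    by (rule vector_diff_chain_within)
  moreover have "(1 / \<Delta>) *\<^sub>R (of_real \<Delta> *s block_field \<mu> q b (f t)) = block_field \<mu> q b (f t)"
    using step_pos by (subst scaleR_eq_of_real_vector_smult) (simp add: vector_smult_assoc)
  ultimately have "((q b \<circ> f) has_vector_derivative block_field \<mu> q b (f t)) (at t within ?cell)"
    by simp
  from has_vector_derivative_vector_smult[OF this, of "\<mu> powi a"]
  have "((\<lambda>u. (\<mu> powi a) *s q b (f u)) has_vector_derivative (\<mu> powi a) *s block_field \<mu> q b (f t))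
      (at t within ?cell)"
    by (simp add: o_def)
  moreover have "(\<mu> powi a) *s block_field \<mu> q b (f t) = rhs (glue_blocks N \<Delta> \<mu> q) t"
    using rhs_glue_blocks[OF \<open>\<mu> \<noteq> 0\<close> boundary ft, of "k + 1"] step_pos
    by (simp add: a_def b_def f_def field_simps)
  ultimately have D: "((\<lambda>u. (\<mu> powi a) *s q b (f u)) has_vector_derivative rhs (glue_blocks N \<Delta> \<mu> q) t)
      (at t within ?cell)"
    by simp
  have on_cell: "glue_blocks N \<Delta> \<mu> q u = (\<mu> powi a) *s q b (f u)" if "u \<in> ?cell" for u
    using glue_blocks_on_cell[OF \<open>\<mu> \<noteq> 0\<close> boundary that] by (simp add: a_def b_def f_def)
  show "(glue_blocks N \<Delta> \<mu> q has_vector_derivative rhs (glue_blocks N \<Delta> \<mu> q) t) (at t within ?cell)"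
    by (rule has_vector_derivative_transform[OF t _ D]) (rule on_cell)
qed

lemma glue_blocks_quasiperiodic:
  assumes "\<mu> \<noteq> 0"
  shows "glue_blocks N \<Delta> \<mu> q (t + T) = \<mu> *s glue_blocks N \<Delta> \<mu> q t"
proof -
  define s k where "s = frac (t / \<Delta>)" and "k = \<lfloor>t / \<Delta>\<rfloor> + 1"
  have t: "t = (s + of_int k - 1) * \<Delta>"
    unfolding s_def k_def by (rule lattice_point_decomp[OF step_pos])
  have s: "0 \<le> s" "s < 1" by (simp_all add: s_def frac_lt_1)
  have "t + T = (s + of_int (k + 1 * int N) - 1) * \<Delta>" by (simp add: t T_eq algebra_simps)
  then have "glue_blocks N \<Delta> \<mu> q (t + T) = (\<mu> powi idx_a N (k + 1 * int N)) *s q (idx_b N (k + 1 * int N)) s"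
    by (simp only: glue_blocks_at_lattice_point[OF step_pos s])
  also have "\<dots> = \<mu> *s ((\<mu> powi idx_a N k) *s q (idx_b N k) s)"
    using \<open>\<mu> \<noteq> 0\<close> by (simp only: idx_shift[OF N_pos]) (simp add: power_int_add_1 vector_smult_assoc mult.commute)
  also have "\<dots> = \<mu> *s glue_blocks N \<Delta> \<mu> q t"
    by (simp only: t glue_blocks_at_lattice_point[OF step_pos s])
  finally show ?thesis .
qed

lemma floquet_multiplier_if_bvp_solvable:
  assumes "floquet_bvp A h n N \<Delta> \<mu> q" and "\<mu> \<noteq> 0"
  shows "floquet_multiplier A h \<tau> T \<mu>"
proof -
  define x where "x = glue_blocks N \<Delta> \<mu> q"
  obtain m where m: "m \<in> {1..N}" "q m 0 \<noteq> 0"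
    and deriv: "\<And>m s. m \<in> {1..N} \<Longrightarrow> s \<in> {0..1} \<Longrightarrow>
      (q m has_vector_derivative of_real \<Delta> *s block_field \<mu> q m s) (at s within {0..1})"
    and boundary: "\<And>m. m \<in> {1..N} \<Longrightarrow> q m 1 = (if m < N then q (m + 1) 0 else \<mu> *s q 1 0)"
    using assms(1) unfolding floquet_bvp_iff by blast
  have x_deriv: "(x has_vector_derivative rhs x t) (at t)" for t
    unfolding x_def using \<open>\<mu> \<noteq> 0\<close> deriv boundary by (rule glue_blocks_has_vector_derivative)
  then have "continuous_on UNIV x"
    by (intro continuous_at_imp_continuous_on ballI has_vector_derivative_continuous)
  then have x_sol: "dde_sol A h \<tau> x x"
    unfolding dde_sol_def using x_deriv has_vector_derivative_at_within
    by (blast intro: continuous_on_subset)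
  have "\<exists>\<theta>\<in>{-\<tau> h..0}. x \<theta> \<noteq> 0"
  proof (rule ccontr)
    assume "\<not> (\<exists>\<theta>\<in>{-\<tau> h..0}. x \<theta> \<noteq> 0)"
    then have "dde_sol A h \<tau> x (\<lambda>_. 0)"
      by (auto simp: dde_sol_def dde_rhs_def)
    moreover have "0 \<le> (0 + of_int (int m) - 1) * \<Delta>" using m(1) step_pos by simp
    ultimately have "x ((0 + of_int (int m) - 1) * \<Delta>) = 0"
      using dde_sol_unique[OF x_sol] max_delay_nonneg by (metis neg_le_0_iff_le order_trans)
    moreover have "x ((0 + of_int (int m) - 1) * \<Delta>) = q m 0"
      using glue_blocks_at_lattice_point[OF step_pos, of 0 N \<mu> q "int m"] idx_eqI[OF m(1), of "int m" 0]
      by (simp add: x_def)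
    ultimately show False using m(2) by simp
  qed
  moreover have "monodromy A h \<tau> T x \<theta> = \<mu> *s x \<theta>" if "\<theta> \<in> {-\<tau> h..0}" for \<theta>
  proof -
    have "x (\<theta> + T) = \<mu> *s x \<theta>"
      unfolding x_def by (rule glue_blocks_quasiperiodic[OF \<open>\<mu> \<noteq> 0\<close>])
    then show ?thesis using that by (simp add: monodromy_eq[OF x_sol] add.commute)
  qed
  moreover have "continuous_on {-\<tau> h..0} x"
    using \<open>continuous_on UNIV x\<close> by (rule continuous_on_subset) simp
  ultimately show ?thesis
    unfolding floquet_multiplier_def using \<open>\<mu> \<noteq> 0\<close> by blast
qed

end

lemma smooth_fun_continuous: "smooth_fun f \<Longrightarrow> continuous_on UNIV f"
  unfolding smooth_fun_def
  by (metis continuous_at_imp_continuous_on has_vector_derivative_continuous)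

lemma increasing_delays_bounds:
  fixes \<tau> :: "nat \<Rightarrow> real"
  assumes "\<tau> 0 = 0" and "h \<ge> 1 \<Longrightarrow> \<tau> 0 \<le> \<tau> 1" and "\<forall>j. 1 \<le> j \<and> j < h \<longrightarrow> \<tau> j < \<tau> (Suc j)"
    and "j \<le> h"
  shows "0 \<le> \<tau> j" and "\<tau> j \<le> \<tau> h"
proof -
  have step: "\<tau> (min i h) \<le> \<tau> (min (Suc i) h)" for i
    using assms(2,3) by (cases "i < h"; cases i) (auto simp: min_def)
  show "0 \<le> \<tau> j" using lift_Suc_mono_le[of "\<lambda>i. \<tau> (min i h)", OF step, of 0 j] assms(1,4) by simp
  show "\<tau> j \<le> \<tau> h" using lift_Suc_mono_le[of "\<lambda>i. \<tau> (min i h)", OF step, of j h] assms(4) by simp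
qed

theorem lemma2p1:
  fixes A :: "nat \<Rightarrow> real \<Rightarrow> real^'d^'d"
    and h N :: nat and T \<Delta> :: real and \<tau> :: "nat \<Rightarrow> real" and n :: "nat \<Rightarrow> int"
    and \<mu> :: complex
  assumes smooth: "\<forall>j\<le>h. smooth_fun (A j)"
    and T_pos: "T > 0"
    and periodic: "\<forall>j\<le>h. \<forall>t. A j (t + T) = A j t"
    and tau0: "\<tau> 0 = 0"
    and tau1: "h \<ge> 1 \<Longrightarrow> \<tau> 0 \<le> \<tau> 1"
    and tau_strict: "\<forall>j. 1 \<le> j \<and> j < h \<longrightarrow> \<tau> j < \<tau> (Suc j)"
    and Delta_pos: "\<Delta> > 0"
    and T_eq: "T = real N * \<Delta>"
    and tau_eq: "\<forall>j\<le>h. \<tau> j = real_of_int (n j) * \<Delta>"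
    and n0: "n 0 = 0"
    and mu_nz: "\<mu> \<noteq> 0"
  shows "floquet_multiplier A h \<tau> T \<mu> \<longleftrightarrow> (\<exists>q. floquet_bvp A h n N \<Delta> \<mu> q)"
proof -
  interpret periodic_delay_system A h \<tau> T \<Delta> N n
  proof
    show "continuous_on UNIV (A j)" if "j \<le> h" for j
      using smooth that by (simp add: smooth_fun_continuous)
    show "0 \<le> \<tau> j" "\<tau> j \<le> \<tau> h" if "j \<le> h" for j
      using increasing_delays_bounds[OF tau0 tau1 tau_strict that] by simp_all
    show "0 < N" using T_pos T_eq by (cases N) simp_all
  qed (use Delta_pos T_eq tau_eq periodic in simp_all)
  show ?thesis
    using floquet_bvp_solvable_if_multiplier floquet_multiplier_if_bvp_solvable mu_nz by blast
qed

end
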